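(* Let $n$ be a positive integer and $m$ an integer. Put $\delta_m=1+(-1)^{m-1}$; for a polynomial $P$ let $\widehat{P}$ denote the sum of the terms of $P$ of odd degree and $\overline{P}=P-\delta_m\widehat{P}$. Then for $-\pi<\arg\zeta<\pi$, $$\begin{aligned}S_{-n-1,-n}(\zeta\mathrm{e}^{-m\pi i})&=(-1)^{mn}S_{-n-1,-n}(\zeta)+\frac{(-1)^{(m+1)n}}{2^nn!}\zeta^{-n}\Big\{-\delta_m\big[\widehat{A}_n(\zeta)+\widehat{B}_n(\zeta)S_{-1,0}(\zeta)+\zeta\widehat{C}_n(\zeta)S'_{-1,0}(\zeta)\big]\\&\quad+\overline{B}_n(\zeta)\big[K''_+H^{(1)}_0(\zeta)+K''_-H^{(2)}_0(\zeta)\big]-\zeta\overline{C}_n(\zeta)\big[K''_+H^{(1)}_1(\zeta)+K''_-H^{(2)}_1(\zeta)\big]\Big\},\end{aligned}$$ where $K''_\pm=-\frac{m\pi^2(m\pm1)}{4}$.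
   Context: $H^{(1)}_\nu=J_\nu+iY_\nu$, $H^{(2)}_\nu=J_\nu-iY_\nu$ are Hankel functions ($J_\nu,Y_\nu$ Bessel functions of first and second kinds); $\psi=\Gamma'/\Gamma$. $S_{-1,0}(\zeta)=\frac12\sum_{k\ge0}\frac{(-1)^k(\zeta/2)^{2k}}{(k!)^2}\big\{[\log\frac{\zeta}{2}-\psi(k+1)]^2-\frac12\psi'(k+1)+\frac{\pi^2}{4}\big\}$ and the Lommel function $S_{-n-1,-n}(\zeta)=\frac{(-1)^n\zeta^n}{n!}\frac{d^n}{d(\zeta^2)^n}S_{-1,0}(\zeta)$. The polynomials $A_n,B_n,C_n$ are defined by $A_1=B_1=0$, $C_1=1$ and for $n\ge2$: $A_n=-2(n-1)A_{n-1}+\zeta A'_{n-1}+C_{n-1}$, $B_n=-2(n-1)B_{n-1}+\zeta B'_{n-1}-\zeta^2C_{n-1}$, $C_n=-2(n-1)C_{n-1}+B_{n-1}+\zeta C'_{n-1}$; with them, $S_{-n-1,-n}(\zeta)=\frac{(-1)^n\zeta^{-n}}{2^nn!}\big[A_n(\zeta)+B_n(\zeta)S_{-1,0}(\zeta)+\zeta C_n(\zeta)S'_{-1,0}(\zeta)\big]$. Right-hand side functions are on the principal branch $-\pi<\arg\zeta<\pi$; $g(\zeta\mathrm{e}^{-m\pi i})$ is the value of the analytic continuation of the principal branch at the point over $\zeta$ with argument $\arg\zeta-m\pi$. *)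

theory Defs
  imports "HOL-Analysis.Analysis" "HOL-Computational_Algebra.Polynomial"
begin

text \<open>Bessel functions of integer order n on the principal branch (DLMF 10.2.2, 10.8.1).\<close>

definition BesselJ :: "nat \<Rightarrow> complex \<Rightarrow> complex" where
  "BesselJ n z = (\<Sum>k. (-1)^k * (z/2)^(2*k+n) / (of_nat (fact k) * of_nat (fact (n+k))))"

definition BesselY :: "nat \<Rightarrow> complex \<Rightarrow> complex" where
  "BesselY n z =
     - ((z/2) powi (- int n) / of_real pi) *
         (\<Sum>k<n. of_nat (fact (n-k-1)) / of_nat (fact k) * (z^2/4)^k)
     + (2 / of_real pi) * Ln (z/2) * BesselJ n z
     - ((z/2)^n / of_real pi) *
         (\<Sum>k. (Digamma (of_nat (k+1)) + Digamma (of_nat (n+k+1))) * (-(z^2)/4)^k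
                / (of_nat (fact k) * of_nat (fact (n+k))))"

definition Hankel1 :: "nat \<Rightarrow> complex \<Rightarrow> complex" where
  "Hankel1 n z = BesselJ n z + \<i> * BesselY n z"

definition Hankel2 :: "nat \<Rightarrow> complex \<Rightarrow> complex" where
  "Hankel2 n z = BesselJ n z - \<i> * BesselY n z"

text \<open>S_{-1,0} on the Riemann surface of the logarithm: the point zeta = exp w, and
  log(zeta/2) = w - ln 2. The principal branch is obtained with w = Ln zeta, and the value
  at zeta e^{-m pi i} (analytic continuation) with w = Ln zeta - m pi i.\<close>

definition Scov :: "complex \<Rightarrow> complex" where
  "Scov w = (1/2) * (\<Sum>k. (-1)^k * (exp w / 2)^(2*k) / (of_nat (fact k))^2 *
       ((w - of_real (ln 2) - Digamma (of_nat (k+1)))^2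
        - (1/2) * Polygamma 1 (of_nat (k+1)) + of_real (pi^2) / 4))"

text \<open>d/d(zeta^2) expressed in the logarithmic variable w (zeta = exp w).\<close>
definition Dsq :: "(complex \<Rightarrow> complex) \<Rightarrow> complex \<Rightarrow> complex" where
  "Dsq f w = deriv f w / (2 * exp (2*w))"

text \<open>Lommel function S_{-n-1,-n} on the Riemann surface of the logarithm.\<close>
definition Scov_n :: "nat \<Rightarrow> complex \<Rightarrow> complex" where
  "Scov_n n w = (-1)^n * exp (of_nat n * w) / of_nat (fact n) * (Dsq ^^ n) Scov w"

definition S10 :: "complex \<Rightarrow> complex" where
  "S10 z = Scov (Ln z)"

definition Sn :: "nat \<Rightarrow> complex \<Rightarrow> complex" where
  "Sn n z = Scov_n n (Ln z)"

text \<open>Polynomials A_n, B_n, C_n (index n >= 1; index 0 unused).\<close>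
fun ABC :: "nat \<Rightarrow> complex poly \<times> complex poly \<times> complex poly" where
  "ABC 0 = (0, 0, 0)"
| "ABC (Suc 0) = (0, 0, 1)"
| "ABC (Suc (Suc k)) =
     (let (A, B, C) = ABC (Suc k); c = - 2 * of_nat (Suc k); X = [:0, 1:] in
       (smult c A + X * pderiv A + C,
        smult c B + X * pderiv B - X^2 * C,
        smult c C + B + X * pderiv C))"

definition polyA :: "nat \<Rightarrow> complex poly" where "polyA n = fst (ABC n)"
definition polyB :: "nat \<Rightarrow> complex poly" where "polyB n = fst (snd (ABC n))"
definition polyC :: "nat \<Rightarrow> complex poly" where "polyC n = snd (snd (ABC n))"

definition odd_part :: "complex poly \<Rightarrow> complex poly" where
  "odd_part p = (\<Sum>i\<le>degree p. if odd i then monom (coeff p i) i else 0)"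

definition delta :: "int \<Rightarrow> complex" where
  "delta m = 1 + (-1) powi (m - 1)"

definition bar_part :: "int \<Rightarrow> complex poly \<Rightarrow> complex poly" where
  "bar_part m p = p - smult (delta m) (odd_part p)"

end

theory Submission
  imports Defs "HOL-Complex_Analysis.Cauchy_Integral_Formula"
begin

(*
  Write zeta = e^w and u = log(zeta/2) = w - ln 2. Then S_{-1,0} = (u^2 F - 2 u P + Q)/2 with entire
  power series F = J_0, P, Q in zeta^2, and continuing through m half-turns replaces u by u - c,
  c = m pi i, while leaving zeta^2 fixed. So the continuation adds (c^2/2) J_0 - c (u J_0 - P), and
  u J_0 - P = (pi/2) Y_0: the jump solves Bessel's equation of order 0, so it is a combination of
  Hankel functions. The operator d/d(zeta^2) commutes with the continuation, and its n-th power
  sends any solution G to zeta^(-2n) 2^(-n) (B_n(zeta) G + C_n(zeta) zeta G'). Since A_n, B_n, C_n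
  are even polynomials, their odd parts vanish and the barred polynomials are B_n, C_n themselves.
*)

section \<open>Entire power series\<close>

definition entire_fps :: "complex fps \<Rightarrow> bool" where
  "entire_fps f \<longleftrightarrow> fps_conv_radius f = \<infinity>"

lemma entire_fps_norm_less: "entire_fps f \<Longrightarrow> ereal (norm z) < fps_conv_radius f"
  by (simp add: entire_fps_def)

lemma entire_fps_if_fact_bound:
  assumes "\<And>k. norm (fps_nth f k) \<le> M / fact k"
  shows "entire_fps f"
  unfolding entire_fps_def fps_conv_radius_def
proof (rule conv_radius_inftyI'')
  fix z :: complex
  show "summable (\<lambda>k. fps_nth f k * z ^ k)"
  proof (rule summable_comparison_test)
    show "summable (\<lambda>k. M * (inverse (fact k) * norm z ^ k))"
      by (intro summable_mult summable_exp)
    show "\<exists>N. \<forall>k\<ge>N. norm (fps_nth f k * z ^ k) \<le> M * (inverse (fact k) * norm z ^ k)"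
    proof (intro exI allI impI)
      fix k :: nat
      have "norm (fps_nth f k) * norm z ^ k \<le> M / fact k * norm z ^ k"
        by (intro mult_right_mono assms) simp
      thus "norm (fps_nth f k * z ^ k) \<le> M * (inverse (fact k) * norm z ^ k)"
        by (simp add: norm_mult norm_power divide_inverse)
    qed
  qed
qed

lemma entire_fps_diff: "entire_fps f \<Longrightarrow> entire_fps g \<Longrightarrow> entire_fps (f - g)"
  and entire_fps_mult: "entire_fps f \<Longrightarrow> entire_fps g \<Longrightarrow> entire_fps (f * g)"
  using fps_conv_radius_diff[of f g] fps_conv_radius_mult[of f g]
  by (auto simp: entire_fps_def top_ereal_def[symmetric] top.extremum_unique)

lemma entire_fps_deriv: "entire_fps f \<Longrightarrow> entire_fps (fps_deriv f)"
  using fps_conv_radius_deriv[of f]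
  by (auto simp: entire_fps_def top_ereal_def[symmetric] top.extremum_unique)

lemma entire_fps_const: "entire_fps (fps_const c)"
  and entire_fps_X: "entire_fps fps_X"
  by (simp_all add: entire_fps_def)

definition fps_theta :: "complex fps \<Rightarrow> complex fps" where
  "fps_theta f = fps_X * fps_deriv f"

lemma fps_theta_nth [simp]: "fps_nth (fps_theta f) n = of_nat n * fps_nth f n"
  by (cases n) (simp_all add: fps_theta_def)

lemma entire_fps_theta: "entire_fps f \<Longrightarrow> entire_fps (fps_theta f)"
  unfolding fps_theta_def by (intro entire_fps_mult entire_fps_X entire_fps_deriv)

definition eval_exp2 :: "complex fps \<Rightarrow> complex \<Rightarrow> complex" where
  "eval_exp2 f w = eval_fps f (exp (2*w))"

lemma eval_exp2_diff: "entire_fps f \<Longrightarrow> entire_fps g \<Longrightarrow> eval_exp2 (f - g) w = eval_exp2 f w - eval_exp2 g w"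
  unfolding eval_exp2_def by (intro eval_fps_diff entire_fps_norm_less)

lemma eval_exp2_const_mult: "entire_fps f \<Longrightarrow> eval_exp2 (fps_const c * f) w = c * eval_exp2 f w"
  unfolding eval_exp2_def by (subst eval_fps_mult) (auto simp: entire_fps_def)

lemma eval_exp2_X_mult: "entire_fps f \<Longrightarrow> eval_exp2 (fps_X * f) w = exp (2*w) * eval_exp2 f w"
  unfolding eval_exp2_def by (subst eval_fps_mult) (auto simp: entire_fps_def)

lemma eval_exp2_sums: "entire_fps f \<Longrightarrow> (\<lambda>k. fps_nth f k * exp (2*w) ^ k) sums eval_exp2 f w"
  unfolding eval_exp2_def by (rule sums_eval_fps) (simp add: entire_fps_def)

lemma eval_exp2_Ln_sums:
  "entire_fps f \<Longrightarrow> z \<noteq> 0 \<Longrightarrow> (\<lambda>k. fps_nth f k * (z^2)^k) sums eval_exp2 f (Ln z)"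
  using eval_exp2_sums[of f "Ln z"] by (simp add: exp_double)

lemma eval_exp2_period: "exp (2*c) = 1 \<Longrightarrow> eval_exp2 f (w - c) = eval_exp2 f w"
  unfolding eval_exp2_def by (simp add: right_diff_distrib exp_diff)

lemma has_field_derivative_eval_exp2:
  assumes "entire_fps f"
  shows "(eval_exp2 f has_field_derivative 2 * eval_exp2 (fps_theta f) w) (at w)"
proof -
  have "((\<lambda>w. eval_fps f (exp (2*w))) has_field_derivative
          eval_fps (fps_deriv f) (exp (2*w)) * (exp (2*w) * 2)) (at w)"
    by (intro DERIV_chain2[where f="eval_fps f"] has_field_derivative_eval_fps
          entire_fps_norm_less entire_fps_deriv assms) (auto intro!: derivative_eq_intros)
  moreover have "eval_fps (fps_theta f) (exp (2*w)) = exp (2*w) * eval_fps (fps_deriv f) (exp (2*w))"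
    unfolding fps_theta_def using entire_fps_deriv[OF assms]
    by (subst eval_fps_mult) (auto simp: entire_fps_def)
  ultimately show ?thesis unfolding eval_exp2_def[abs_def] by (simp add: algebra_simps)
qed

lemma holomorphic_eval_exp2: "entire_fps f \<Longrightarrow> eval_exp2 f holomorphic_on UNIV"
  using has_field_derivative_eval_exp2 by (auto simp: holomorphic_on_open)

definition J0_coeff :: "nat \<Rightarrow> complex" where
  "J0_coeff k = (-1)^k / (4^k * (fact k)^2)"

lemma J0_coeff_Suc_explicit: "J0_coeff (Suc k) = - ((-1)^k / (4 * 4^k * (of_nat (Suc k) * fact k)^2))"
  unfolding J0_coeff_def by (simp del: of_nat_Suc)

lemma J0_coeff_Suc: "of_nat (Suc j)^2 * J0_coeff (Suc j) = - J0_coeff j / 4"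
  unfolding J0_coeff_Suc_explicit by (simp add: J0_coeff_def field_simps power2_eq_square del: of_nat_Suc)

lemma four_power_ge_square: "(real k + 1)^2 \<le> 4^k"
proof (induction k)
  case (Suc k)
  have "(real (Suc k) + 1)^2 \<le> 4 * (real k + 1)^2" by (simp add: power2_eq_square algebra_simps)
  also have "\<dots> \<le> 4 * 4^k" using Suc by simp
  finally show ?case by simp
qed simp

lemma entire_fps_J0_coeff_mult:
  assumes "\<And>k. norm (c k) \<le> M * (real k + 1)^2"
  shows "entire_fps (Abs_fps (\<lambda>k. J0_coeff k * c k))"
proof (rule entire_fps_if_fact_bound)
  fix k
  have "0 \<le> M * (real 0 + 1)^2" using order.trans[OF norm_ge_zero assms] .
  hence M: "M \<ge> 0" by simp
  have "norm (J0_coeff k * c k) = norm (c k) / (4^k * (fact k)^2)"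
    by (simp add: J0_coeff_def norm_mult norm_divide norm_power)
  also have "\<dots> \<le> M * ((real k + 1)^2 / 4^k) / (fact k)^2"
    using assms[of k] by (simp add: divide_right_mono field_simps)
  also have "\<dots> \<le> M / (fact k)^2"
    using four_power_ge_square[of k] M
    by (intro divide_right_mono mult_left_le) auto
  also have "\<dots> \<le> M / fact k"
    using M by (intro divide_left_mono) (auto simp: power2_eq_square)
  finally show "norm (fps_nth (Abs_fps (\<lambda>k. J0_coeff k * c k)) k) \<le> M / fact k" by simp
qed

definition psi_succ :: "nat \<Rightarrow> complex" where
  "psi_succ k = Digamma (of_nat (k+1))"

definition S10_q :: "nat \<Rightarrow> complex" where
  "S10_q k = (psi_succ k)^2 - (1/2) * Polygamma 1 (of_nat (k+1)) + of_real (pi^2) / 4"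

definition fps_J0 :: "complex fps" where "fps_J0 = Abs_fps J0_coeff"

definition fps_J0_psi :: "complex fps" where "fps_J0_psi = Abs_fps (\<lambda>k. J0_coeff k * psi_succ k)"

definition fps_J0_q :: "complex fps" where "fps_J0_q = Abs_fps (\<lambda>k. J0_coeff k * S10_q k)"

lemma psi_succ_Suc: "psi_succ (Suc k) = psi_succ k + 1 / of_nat (Suc k)"
proof -
  have "psi_succ (Suc k) = Digamma (of_nat (Suc k) + 1)" by (simp add: psi_succ_def add_ac)
  also have "\<dots> = Digamma (of_nat (Suc k)) + 1 / of_nat (Suc k)"
    by (rule Digamma_plus1) (simp del: of_nat_Suc)
  finally show ?thesis by (simp add: psi_succ_def)
qed

lemma norm_psi_succ_le: "norm (psi_succ k) \<le> real k + 1"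
proof -
  have "psi_succ k = of_real (harm k - euler_mascheroni)"
    unfolding psi_succ_def using Digamma_of_nat[of k, where 'a=complex]
    by (simp add: of_real_harm)
  hence "norm (psi_succ k) = \<bar>harm k - euler_mascheroni\<bar>" by (simp only: norm_of_real)
  moreover have "harm k \<le> real k"
    using sum_mono[of "{..<k}" "\<lambda>j. inverse (real (Suc j))" "\<lambda>_. 1"]
    by (simp add: harm_altdef field_simps)
  ultimately show ?thesis
    using harm_nonneg[of k, where 'a=real] euler_mascheroni_pos euler_mascheroni_less_13_over_22
    by (simp add: abs_le_iff)
qed

lemma norm_Polygamma1_nat_le: "norm (Polygamma 1 (of_nat (k+1) :: complex)) \<le> Polygamma 1 (1::real)"
proof -
  have "(of_nat (k+1) :: complex) = of_real (real (k+1))" by simp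
  hence "Polygamma 1 (of_nat (k+1) :: complex) = of_real (Polygamma 1 (real (k+1)))"
    by (simp only: Polygamma_of_real)
  moreover have "Polygamma 1 (real (k+1)) > 0"
    using Polygamma_real_odd_pos[of "real (k+1)" 1] nonpos_Ints_nonpos[of "real (k+1)"] by force
  moreover have "Polygamma 1 (real (k+1)) \<le> Polygamma 1 1"
    using Polygamma_real_strict_antimono[of 1 "real (k+1)" 1] by (cases k) auto
  ultimately show ?thesis by simp
qed

lemma entire_fps_J0: "entire_fps fps_J0"
  using entire_fps_J0_coeff_mult[of "\<lambda>_. 1" 1] by (simp add: fps_J0_def)

lemma entire_fps_J0_psi: "entire_fps fps_J0_psi"
  unfolding fps_J0_psi_def
proof (rule entire_fps_J0_coeff_mult)
  fix k
  have "real k + 1 \<le> (real k + 1)^2" by (simp add: power2_eq_square)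
  thus "norm (psi_succ k) \<le> 1 * (real k + 1)^2" using norm_psi_succ_le[of k] by simp
qed

lemma entire_fps_J0_q: "entire_fps fps_J0_q"
  unfolding fps_J0_q_def
proof (rule entire_fps_J0_coeff_mult)
  fix k
  define P where "P = Polygamma 1 (1::real)"
  have P: "norm (Polygamma 1 (of_nat (k+1) :: complex)) \<le> P" "P \<ge> 0"
    using norm_Polygamma1_nat_le[of k] norm_Polygamma1_nat_le[of 0] unfolding P_def
    by (auto intro: order.trans[OF norm_ge_zero])
  have k1: "1 \<le> (real k + 1)^2" by (rule one_le_power) simp
  have "norm (S10_q k) \<le> norm ((psi_succ k)^2) + norm ((1/2) * Polygamma 1 (of_nat (k+1) :: complex))
      + norm (of_real (pi^2) / (4::complex))"
    unfolding S10_q_def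
    by (rule order.trans[OF norm_triangle_ineq add_right_mono[OF norm_triangle_ineq4]])
  also have "\<dots> = norm (psi_succ k)^2 + (1/2) * norm (Polygamma 1 (of_nat (k+1) :: complex)) + pi^2/4"
    by (simp add: norm_power norm_mult norm_divide)
  also have "\<dots> \<le> (real k + 1)^2 + P + pi^2"
    using norm_psi_succ_le[of k] P by (intro add_mono power_mono) auto
  also have "\<dots> \<le> (1 + P + pi^2) * (real k + 1)^2"
    using k1 P(2) mult_left_mono[OF k1, of "P + pi^2"] by (simp add: algebra_simps)
  finally show "norm (S10_q k) \<le> (1 + P + pi^2) * (real k + 1)^2" .
qed

lemma fps_theta_theta_J0: "fps_theta (fps_theta fps_J0) = fps_const (-1/4) * (fps_X * fps_J0)"
proof (rule fps_ext)
  fix n show "fps_nth (fps_theta (fps_theta fps_J0)) n = fps_nth (fps_const (-1/4) * (fps_X * fps_J0)) n"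
  proof (cases n)
    case (Suc j)
    have "fps_nth (fps_theta (fps_theta fps_J0)) n = of_nat (Suc j)^2 * J0_coeff (Suc j)"
      using Suc by (simp add: fps_J0_def power2_eq_square)
    also have "\<dots> = - J0_coeff j / 4" by (rule J0_coeff_Suc)
    finally show ?thesis using Suc by (simp add: fps_J0_def)
  qed (simp add: fps_J0_def)
qed

lemma fps_theta_theta_J0_psi:
  "fps_theta (fps_theta fps_J0_psi) = fps_theta fps_J0 - fps_const (1/4) * (fps_X * fps_J0_psi)"
proof (rule fps_ext)
  fix n show "fps_nth (fps_theta (fps_theta fps_J0_psi)) n
      = fps_nth (fps_theta fps_J0 - fps_const (1/4) * (fps_X * fps_J0_psi)) n"
  proof (cases n)
    case (Suc j)
    have s: "of_nat (Suc j) \<noteq> (0::complex)" by (simp del: of_nat_Suc)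
    have "fps_nth (fps_theta (fps_theta fps_J0_psi)) n
        = (of_nat (Suc j)^2 * J0_coeff (Suc j)) * psi_succ (Suc j)"
      using Suc by (simp add: fps_J0_psi_def power2_eq_square)
    also have "\<dots> = (- J0_coeff j / 4) * (psi_succ j + 1 / of_nat (Suc j))"
      by (simp only: J0_coeff_Suc psi_succ_Suc)
    also have "\<dots> = of_nat (Suc j) * J0_coeff (Suc j) - (1/4) * (J0_coeff j * psi_succ j)"
    proof -
      have "of_nat (Suc j) * J0_coeff (Suc j) = (of_nat (Suc j)^2 * J0_coeff (Suc j)) / of_nat (Suc j)"
        using s by (simp add: power2_eq_square)
      also have "\<dots> = (- J0_coeff j / 4) / of_nat (Suc j)" by (simp only: J0_coeff_Suc)
      finally show ?thesis using s by (simp add: field_simps del: of_nat_Suc)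
    qed
    finally show ?thesis using Suc by (simp add: fps_J0_def fps_J0_psi_def)
  qed (simp add: fps_J0_def fps_J0_psi_def)
qed

section \<open>Bessel's equation of order 0 in the logarithmic variable\<close>

(* With zeta = e^w, Bessel's equation of order 0, zeta^2 y'' + zeta y' + zeta^2 y = 0, becomes
   G'' = - e^(2w) G; here G' stands for the derivative of G with respect to w. *)
definition bessel0_log :: "(complex \<Rightarrow> complex) \<Rightarrow> (complex \<Rightarrow> complex) \<Rightarrow> bool" where
  "bessel0_log G G' \<longleftrightarrow> (\<forall>w. (G has_field_derivative G' w) (at w)
                            \<and> (G' has_field_derivative - exp (2*w) * G w) (at w))"

lemma bessel0_log_lincomb:
  assumes "bessel0_log G G'" "bessel0_log H H'"
  shows "bessel0_log (\<lambda>w. a * G w + b * H w) (\<lambda>w. a * G' w + b * H' w)"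
  using assms unfolding bessel0_log_def
  by (auto intro!: derivative_eq_intros simp: algebra_simps)

definition log_half :: "complex \<Rightarrow> complex" where "log_half w = w - of_real (ln 2)"

(* J0_log w = J_0(e^w) and Y0_log w = (pi/2) Y_0(e^w), see BesselJ0_eq and BesselY0_eq *)
definition J0_log :: "complex \<Rightarrow> complex" where "J0_log = eval_exp2 fps_J0"

definition dJ0_log :: "complex \<Rightarrow> complex" where "dJ0_log w = 2 * eval_exp2 (fps_theta fps_J0) w"

definition Y0_log :: "complex \<Rightarrow> complex" where
  "Y0_log w = log_half w * J0_log w - eval_exp2 fps_J0_psi w"

definition dY0_log :: "complex \<Rightarrow> complex" where
  "dY0_log w = J0_log w + log_half w * dJ0_log w - 2 * eval_exp2 (fps_theta fps_J0_psi) w"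

lemma bessel0_log_J0: "bessel0_log J0_log dJ0_log"
  unfolding bessel0_log_def
proof
  fix w
  have "(dJ0_log has_field_derivative 2 * (2 * eval_exp2 (fps_theta (fps_theta fps_J0)) w)) (at w)"
    unfolding dJ0_log_def[abs_def]
    by (intro DERIV_cmult has_field_derivative_eval_exp2 entire_fps_theta entire_fps_J0)
  moreover have "eval_exp2 (fps_theta (fps_theta fps_J0)) w = - (1/4) * exp (2*w) * J0_log w"
    by (simp add: fps_theta_theta_J0 eval_exp2_const_mult eval_exp2_X_mult J0_log_def
        entire_fps_X entire_fps_J0 entire_fps_mult)
  ultimately show "(J0_log has_field_derivative dJ0_log w) (at w)
      \<and> (dJ0_log has_field_derivative - exp (2*w) * J0_log w) (at w)"
    unfolding J0_log_def dJ0_log_def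
    by (auto intro: has_field_derivative_eval_exp2 entire_fps_J0 simp: algebra_simps)
qed

lemma bessel0_log_Y0: "bessel0_log Y0_log dY0_log"
  unfolding bessel0_log_def
proof
  fix w
  have J0: "(J0_log has_field_derivative dJ0_log w) (at w)"
    and dJ0: "(dJ0_log has_field_derivative - exp (2*w) * J0_log w) (at w)"
    using bessel0_log_J0 by (auto simp: bessel0_log_def)
  have dlog_half: "(log_half has_field_derivative 1) (at w)"
    unfolding log_half_def[abs_def] by (auto intro!: derivative_eq_intros)
  have theta2: "eval_exp2 (fps_theta (fps_theta fps_J0_psi)) w
      = dJ0_log w / 2 - (1/4) * exp (2*w) * eval_exp2 fps_J0_psi w"
    by (simp add: fps_theta_theta_J0_psi eval_exp2_diff eval_exp2_const_mult eval_exp2_X_mult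
        dJ0_log_def entire_fps_X entire_fps_J0_psi entire_fps_mult entire_fps_const
        entire_fps_theta entire_fps_J0)
  have "(Y0_log has_field_derivative dY0_log w) (at w)"
    unfolding Y0_log_def[abs_def]
    by (rule DERIV_cong[OF DERIV_diff[OF DERIV_mult[OF dlog_half J0]
          has_field_derivative_eval_exp2[OF entire_fps_J0_psi]]])
       (simp add: dY0_log_def algebra_simps)
  moreover have "(dY0_log has_field_derivative - exp (2*w) * Y0_log w) (at w)"
    unfolding dY0_log_def[abs_def]
    by (rule DERIV_cong[OF DERIV_diff[OF DERIV_add[OF J0 DERIV_mult[OF dlog_half dJ0]]
          DERIV_cmult[OF has_field_derivative_eval_exp2[OF entire_fps_theta[OF entire_fps_J0_psi]]]]])
       (simp add: theta2 Y0_log_def algebra_simps)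
  ultimately show "(Y0_log has_field_derivative dY0_log w) (at w)
      \<and> (dY0_log has_field_derivative - exp (2*w) * Y0_log w) (at w)" ..
qed

lemma Scov_eq:
  "Scov w = (1/2) * (log_half w ^ 2 * J0_log w - 2 * log_half w * eval_exp2 fps_J0_psi w
                     + eval_exp2 fps_J0_q w)"
proof -
  define Z where "Z = exp (2*w)"
  have term_eq: "(-1)^k * (exp w / 2)^(2*k) / (of_nat (fact k))^2 *
       ((w - of_real (ln 2) - Digamma (of_nat (k+1)))^2
        - (1/2) * Polygamma 1 (of_nat (k+1)) + of_real (pi^2) / 4)
     = log_half w ^ 2 * (fps_nth fps_J0 k * Z ^ k) - 2 * log_half w * (fps_nth fps_J0_psi k * Z ^ k)
       + fps_nth fps_J0_q k * Z ^ k" for k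
  proof -
    have "(exp w / 2)^(2*k) = Z ^ k / 4 ^ k"
      unfolding Z_def power_mult exp_double by (simp add: power_divide)
    thus ?thesis
      by (simp add: fps_J0_def fps_J0_psi_def fps_J0_q_def J0_coeff_def S10_q_def psi_succ_def
          log_half_def field_simps power2_eq_square)
  qed
  have "(\<lambda>k. log_half w ^ 2 * (fps_nth fps_J0 k * Z ^ k) - 2 * log_half w * (fps_nth fps_J0_psi k * Z ^ k)
          + fps_nth fps_J0_q k * Z ^ k)
        sums (log_half w ^ 2 * J0_log w - 2 * log_half w * eval_exp2 fps_J0_psi w + eval_exp2 fps_J0_q w)"
    unfolding Z_def J0_log_def
    by (intro sums_add sums_diff sums_mult eval_exp2_sums entire_fps_J0 entire_fps_J0_psi entire_fps_J0_q)
  thus ?thesis unfolding Scov_def term_eq[symmetric] by (simp add: sums_iff)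
qed

lemma holomorphic_Scov: "Scov holomorphic_on UNIV"
proof -
  have Scov: "Scov = (\<lambda>w. (1/2) * (log_half w ^ 2 * J0_log w - 2 * log_half w * eval_exp2 fps_J0_psi w
                     + eval_exp2 fps_J0_q w))"
    using Scov_eq by auto
  show ?thesis
    unfolding Scov log_half_def J0_log_def
    by (intro holomorphic_intros holomorphic_eval_exp2 entire_fps_J0 entire_fps_J0_psi entire_fps_J0_q)
qed

lemma Scov_period_shift:
  assumes "exp (2*c) = 1"
  shows "Scov (w - c) = Scov w + ((c^2/2) * J0_log w - c * Y0_log w)"
  unfolding Scov_eq Y0_log_def J0_log_def eval_exp2_period[OF assms]
  by (simp add: log_half_def algebra_simps power2_eq_square)

section \<open>Powers of Dsq\<close>

lemma holomorphic_on_UNIV_field_differentiable: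
  "f holomorphic_on UNIV \<Longrightarrow> f field_differentiable at z"
  using holomorphic_on_imp_differentiable_at by blast

lemma holomorphic_Dsq: "f holomorphic_on UNIV \<Longrightarrow> Dsq f holomorphic_on UNIV"
  unfolding Dsq_def[abs_def] by (intro holomorphic_intros holomorphic_deriv) auto

lemma holomorphic_Dsq_power: "f holomorphic_on UNIV \<Longrightarrow> (Dsq ^^ n) f holomorphic_on UNIV"
  by (induction n) (auto intro: holomorphic_Dsq)

lemma Dsq_add:
  assumes "f holomorphic_on UNIV" "g holomorphic_on UNIV"
  shows "Dsq (\<lambda>w. f w + g w) = (\<lambda>w. Dsq f w + Dsq g w)"
  using assms by (auto simp: Dsq_def deriv_add holomorphic_on_UNIV_field_differentiable add_divide_distrib)

lemma Dsq_power_add: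
  assumes "f holomorphic_on UNIV" "g holomorphic_on UNIV"
  shows "(Dsq ^^ n) (\<lambda>w. f w + g w) = (\<lambda>w. (Dsq ^^ n) f w + (Dsq ^^ n) g w)"
  by (induction n) (simp_all add: Dsq_add holomorphic_Dsq_power assms)

lemma Dsq_period_shift:
  assumes "f holomorphic_on UNIV" "exp (2*c) = 1"
  shows "Dsq (\<lambda>w. f (w - c)) = (\<lambda>w. Dsq f (w - c))"
proof
  fix w :: complex
  have "((\<lambda>w. f (w - c)) has_field_derivative deriv f (w - c) * 1) (at w)"
    using assms(1)
    by (intro DERIV_chain2[where f=f] field_differentiable_derivI holomorphic_on_UNIV_field_differentiable)
       (auto intro!: derivative_eq_intros)
  moreover have "exp (2 * (w - c)) = exp (2*w)"
    using assms(2) by (simp add: right_diff_distrib exp_diff)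
  ultimately show "Dsq (\<lambda>w. f (w - c)) w = Dsq f (w - c)" by (simp add: Dsq_def DERIV_imp_deriv)
qed

lemma Dsq_power_period_shift:
  assumes "f holomorphic_on UNIV" "exp (2*c) = 1"
  shows "(Dsq ^^ n) (\<lambda>w. f (w - c)) = (\<lambda>w. (Dsq ^^ n) f (w - c))"
  by (induction n) (simp_all add: Dsq_period_shift holomorphic_Dsq_power assms)

lemma polyABC_1: "polyA 1 = 0" "polyB 1 = 0" "polyC 1 = 1"
  by (simp_all add: polyA_def polyB_def polyC_def)

lemma polyABC_Suc_Suc:
  "polyA (Suc (Suc k)) = smult (- 2 * of_nat (Suc k)) (polyA (Suc k)) + [:0, 1:] * pderiv (polyA (Suc k)) + polyC (Suc k)"
  "polyB (Suc (Suc k)) = smult (- 2 * of_nat (Suc k)) (polyB (Suc k)) + [:0, 1:] * pderiv (polyB (Suc k)) - [:0, 1:]^2 * polyC (Suc k)"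
  "polyC (Suc (Suc k)) = smult (- 2 * of_nat (Suc k)) (polyC (Suc k)) + polyB (Suc k) + [:0, 1:] * pderiv (polyC (Suc k))"
  unfolding polyA_def polyB_def polyC_def
  by (simp_all add: Let_def split: prod.split)

lemma Dsq_bessel0_log_step:
  assumes "bessel0_log G G'"
  shows "Dsq (\<lambda>w. exp (- (2 * of_nat n * w)) / 2^n * (poly B (exp w) * G w + poly C (exp w) * G' w))
       = (\<lambda>w. exp (- (2 * of_nat (Suc n) * w)) / 2^Suc n *
            (poly (smult (- 2 * of_nat n) B + [:0, 1:] * pderiv B - [:0, 1:]^2 * C) (exp w) * G w
             + poly (smult (- 2 * of_nat n) C + B + [:0, 1:] * pderiv C) (exp w) * G' w))"
    (is "Dsq ?H = _")
proof
  fix w :: complex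
  define z where "z = exp w"
  define e where "e = exp (- (2 * of_nat n * w))"
  have G: "(G has_field_derivative G' w) (at w)"
    and G': "(G' has_field_derivative - exp (2*w) * G w) (at w)"
    using assms by (auto simp: bessel0_log_def)
  have poly_exp: "((\<lambda>w. poly p (exp w)) has_field_derivative poly (pderiv p) (exp w) * exp w) (at w)"
    for p :: "complex poly"
    by (rule DERIV_chain2[OF poly_DERIV DERIV_exp])
  have exp_lin: "((\<lambda>w. exp (- (2 * of_nat n * w))) has_field_derivative - (2 * of_nat n) * exp (- (2 * of_nat n * w))) (at w)"
    by (auto intro!: derivative_eq_intros)
  have "(?H has_field_derivative
       (- (2 * of_nat n) * e / 2^n) * (poly B z * G w + poly C z * G' w)
       + e / 2^n * (poly (pderiv B) z * z * G w + poly B z * G' w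
                    + (poly (pderiv C) z * z * G' w + poly C z * (- exp (2*w) * G w)))) (at w)"
    unfolding z_def e_def
    by (rule DERIV_cong, (rule DERIV_mult DERIV_add DERIV_cdivide exp_lin poly_exp G G')+)
       (simp add: algebra_simps)
  hence dH: "deriv ?H w = (- (2 * of_nat n) * e / 2^n) * (poly B z * G w + poly C z * G' w)
       + e / 2^n * (poly (pderiv B) z * z * G w + poly B z * G' w
                    + (poly (pderiv C) z * z * G' w + poly C z * (- exp (2*w) * G w)))"
    by (rule DERIV_imp_deriv)
  have e2: "exp (2*w) = z^2" by (simp add: z_def exp_double)
  have e3: "exp (- (2 * of_nat (Suc n) * w)) = e / z^2"
    unfolding e_def z_def
    by (simp add: exp_minus exp_double[symmetric] exp_add[symmetric] field_simps flip: exp_of_nat_mult)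
  have "z \<noteq> 0" by (simp add: z_def)
  then show "Dsq ?H w = exp (- (2 * of_nat (Suc n) * w)) / 2^Suc n *
            (poly (smult (- 2 * of_nat n) B + [:0, 1:] * pderiv B - [:0, 1:]^2 * C) (exp w) * G w
             + poly (smult (- 2 * of_nat n) C + B + [:0, 1:] * pderiv C) (exp w) * G' w)"
    unfolding Dsq_def dH e2 e3 z_def[symmetric] by (simp add: field_simps power2_eq_square)
qed

lemma Dsq_power_bessel0_log:
  assumes "bessel0_log G G'"
  shows "(Dsq ^^ Suc k) G = (\<lambda>w. exp (- (2 * of_nat (Suc k) * w)) / 2^Suc k *
           (poly (polyB (Suc k)) (exp w) * G w + poly (polyC (Suc k)) (exp w) * G' w))"
proof (induction k)
  case 0
  have "(\<lambda>w. exp (- (2 * of_nat 0 * w)) / 2^0 * (poly 1 (exp w) * G w + poly 0 (exp w) * G' w)) = G"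
    by simp
  with Dsq_bessel0_log_step[OF assms, of 0 1 0] show ?case using polyABC_1 by simp
next
  case (Suc k)
  thus ?case
    using Dsq_bessel0_log_step[OF assms, of "Suc k" "polyB (Suc k)" "polyC (Suc k)"]
    by (simp only: funpow.simps(2) o_apply polyABC_Suc_Suc)
qed

lemma Scov_n_period_shift:
  assumes "exp (2*c) = 1"
  shows "Scov_n (Suc k) (w - c) = exp (- (of_nat (Suc k) * c)) *
    (Scov_n (Suc k) w + (-1)^Suc k / (2^Suc k * of_nat (fact (Suc k))) * exp (- (of_nat (Suc k) * w)) *
      (poly (polyB (Suc k)) (exp w) * ((c^2/2) * J0_log w - c * Y0_log w)
       + poly (polyC (Suc k)) (exp w) * ((c^2/2) * dJ0_log w - c * dY0_log w)))"
proof -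
  let ?n = "Suc k"
  have "bessel0_log (\<lambda>w. (c^2/2) * J0_log w + (-c) * Y0_log w) (\<lambda>w. (c^2/2) * dJ0_log w + (-c) * dY0_log w)"
    by (intro bessel0_log_lincomb bessel0_log_J0 bessel0_log_Y0)
  hence jump: "bessel0_log (\<lambda>w. (c^2/2) * J0_log w - c * Y0_log w) (\<lambda>w. (c^2/2) * dJ0_log w - c * dY0_log w)"
    by simp
  hence "(\<lambda>w. (c^2/2) * J0_log w - c * Y0_log w) holomorphic_on UNIV"
    by (auto simp: bessel0_log_def holomorphic_on_open)
  hence "(Dsq ^^ ?n) Scov (w - c) = (Dsq ^^ ?n) Scov w + (Dsq ^^ ?n) (\<lambda>w. (c^2/2) * J0_log w - c * Y0_log w) w"
    using Dsq_power_period_shift[OF holomorphic_Scov assms, of ?n]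
      Dsq_power_add[OF holomorphic_Scov, of "\<lambda>w. (c^2/2) * J0_log w - c * Y0_log w" ?n]
    by (simp add: Scov_period_shift[OF assms] fun_eq_iff)
  also have "\<dots> = (Dsq ^^ ?n) Scov w + exp (- (2 * of_nat ?n * w)) / 2^?n *
      (poly (polyB ?n) (exp w) * ((c^2/2) * J0_log w - c * Y0_log w)
       + poly (polyC ?n) (exp w) * ((c^2/2) * dJ0_log w - c * dY0_log w))"
    unfolding Dsq_power_bessel0_log[OF jump] ..
  finally have Dsq_shift: "(Dsq ^^ ?n) Scov (w - c) = (Dsq ^^ ?n) Scov w + exp (- (2 * of_nat ?n * w)) / 2^?n *
      (poly (polyB ?n) (exp w) * ((c^2/2) * J0_log w - c * Y0_log w)
       + poly (polyC ?n) (exp w) * ((c^2/2) * dJ0_log w - c * dY0_log w))" .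
  define a e e' where "a = exp (- (of_nat ?n * c))" and "e = exp (of_nat ?n * w)"
    and "e' = exp (- (2 * of_nat ?n * w))"
  have shift: "exp (of_nat ?n * (w - c)) = a * e"
    unfolding a_def e_def by (simp add: exp_add[symmetric] algebra_simps)
  have inverse: "exp (- (of_nat ?n * w)) = e * e'"
    unfolding e_def e'_def by (simp add: exp_add[symmetric] algebra_simps)
  have "(of_nat (fact ?n) :: complex) \<noteq> 0" by (simp only: of_nat_eq_0_iff fact_nonzero) simp
  then show ?thesis
    unfolding Scov_n_def Dsq_shift shift inverse a_def[symmetric] e_def[symmetric] e'_def[symmetric]
    by (simp add: field_simps del: fact_Suc of_nat_fact)
qed

definition even_poly :: "'a::zero poly \<Rightarrow> bool" where
  "even_poly p \<longleftrightarrow> (\<forall>i. odd i \<longrightarrow> coeff p i = 0)"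

lemma even_poly_add: "even_poly p \<Longrightarrow> even_poly q \<Longrightarrow> even_poly (p + q)"
  and even_poly_diff: "even_poly p \<Longrightarrow> even_poly q \<Longrightarrow> even_poly (p - q)"
  and even_poly_smult: "even_poly p \<Longrightarrow> even_poly (smult c p)"
  for p q :: "'a::comm_ring poly"
  by (simp_all add: even_poly_def)

lemma even_poly_X_mult_pderiv: "even_poly p \<Longrightarrow> even_poly ([:0, 1:] * pderiv (p :: 'a::idom poly))"
  by (auto simp: even_poly_def coeff_pCons' coeff_pderiv)

lemma even_poly_X2_mult: "even_poly p \<Longrightarrow> even_poly ([:0, 1:]^2 * (p :: 'a::comm_ring_1 poly))"
  by (auto simp: even_poly_def coeff_pCons' power2_eq_square mult.assoc dest: odd_pos)

lemma even_poly_polyABC: "even_poly (polyA (Suc k)) \<and> even_poly (polyB (Suc k)) \<and> even_poly (polyC (Suc k))"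
proof (induction k)
  case 0
  show ?case by (auto simp: polyABC_1[simplified] even_poly_def coeff_1 dest: odd_pos)
next
  case (Suc k)
  thus ?case unfolding polyABC_Suc_Suc
    by (intro conjI even_poly_add even_poly_diff even_poly_smult even_poly_X_mult_pderiv
        even_poly_X2_mult) auto
qed

lemma odd_part_even_poly: "even_poly p \<Longrightarrow> odd_part p = 0"
  unfolding odd_part_def even_poly_def by (intro sum.neutral) auto

lemma bar_part_even_poly: "even_poly p \<Longrightarrow> bar_part m p = p"
  by (simp add: bar_part_def odd_part_even_poly)

section \<open>Bessel and Hankel functions\<close>

lemma Ln_half: "z \<noteq> 0 \<Longrightarrow> Ln (z/2) = log_half (Ln z)"
  using Ln_divide_of_real[of 2 z] by (simp add: log_half_def)

lemma BesselJ0_eq: "z \<noteq> 0 \<Longrightarrow> BesselJ 0 z = J0_log (Ln z)"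
proof -
  assume z: "z \<noteq> 0"
  have "(-1)^k * (z/2)^(2*k+0) / (of_nat (fact k) * of_nat (fact (0+k))) = fps_nth fps_J0 k * (z^2)^k"
    for k
  proof -
    have "(z/2)^(2*k) = (z^2)^k / 4^k" by (simp add: power_mult power_divide)
    thus ?thesis by (simp add: fps_J0_def J0_coeff_def power2_eq_square)
  qed
  with eval_exp2_Ln_sums[OF entire_fps_J0 z] show ?thesis
    unfolding BesselJ_def J0_log_def by (simp add: sums_iff)
qed

lemma BesselY0_eq: "z \<noteq> 0 \<Longrightarrow> BesselY 0 z = (2 / of_real pi) * Y0_log (Ln z)"
proof -
  assume z: "z \<noteq> 0"
  have term_eq: "(Digamma (of_nat (k+1)) + Digamma (of_nat (0+k+1))) * (-(z^2)/4)^k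
      / (of_nat (fact k) * of_nat (fact (0+k))) = 2 * (fps_nth fps_J0_psi k * (z^2)^k)" for k
  proof -
    have "-(z^2)/4 = (-1) * (z^2/4)" by simp
    hence a: "(-(z^2)/4)^k = (-1)^k * (z^2)^k / 4^k" by (simp only: power_mult_distrib power_divide) simp
    have b: "Digamma (of_nat (0+k+1)) = psi_succ k" "Digamma (of_nat (k+1)) = psi_succ k"
      by (simp_all add: psi_succ_def)
    have c: "fps_nth fps_J0_psi k = (-1)^k / (4^k * (fact k * fact k)) * psi_succ k"
      by (simp add: fps_J0_psi_def J0_coeff_def power2_eq_square)
    show ?thesis unfolding a b c of_nat_fact add_0
      by (simp add: divide_inverse algebra_simps inverse_mult_distrib)
  qed
  have "(\<lambda>k. 2 * (fps_nth fps_J0_psi k * (z^2)^k)) sums (2 * eval_exp2 fps_J0_psi (Ln z))"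
    by (intro sums_mult eval_exp2_Ln_sums entire_fps_J0_psi z)
  hence series: "(\<lambda>k. (Digamma (of_nat (k+1)) + Digamma (of_nat (0+k+1))) * (-(z^2)/4)^k
      / (of_nat (fact k) * of_nat (fact (0+k)))) sums (2 * eval_exp2 fps_J0_psi (Ln z))"
    unfolding term_eq .
  show ?thesis
    unfolding BesselY_def BesselJ0_eq[OF z] Ln_half[OF z] sums_unique[OF series, symmetric]
    by (simp add: Y0_log_def algebra_simps)
qed

lemma BesselJ1_eq: "z \<noteq> 0 \<Longrightarrow> z * BesselJ 1 z = - dJ0_log (Ln z)"
proof -
  assume z: "z \<noteq> 0"
  have term_eq: "z * ((-1)^k * (z/2)^(2*k+1) / (of_nat (fact k) * of_nat (fact (1+k))))
      = -2 * (fps_nth (fps_theta fps_J0) (Suc k) * (z^2)^(Suc k))" for k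
  proof -
    define x where "x = (of_nat (Suc k) :: complex)"
    define s where "s = ((-1)^k :: complex)"
    define F where "F = (fact k :: complex)"
    define Q where "Q = (4^k :: complex)"
    have nonzero: "x \<noteq> 0" "F \<noteq> 0" "Q \<noteq> 0"
      unfolding x_def F_def Q_def by (simp_all del: of_nat_Suc)
    have "(2::complex)^k * 2^k = 4^k" by (simp flip: power_mult_distrib)
    hence p1: "(z/2)^(2*k+1) = z * (z^2)^k / (2 * Q)"
      unfolding Q_def by (simp add: power_add power_mult power_divide power2_eq_square field_simps)
    have p2: "(z^2)^(Suc k) = z * z * (z^2)^k" by (simp add: power2_eq_square)
    have f1: "(fact (1+k) :: complex) = x * F" unfolding x_def F_def by (simp add: algebra_simps)
    have c: "fps_nth (fps_theta fps_J0) (Suc k) = x * (- (s / (4 * Q * (x * F)^2)))"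
      unfolding fps_theta_nth fps_J0_def fps_nth_Abs_fps J0_coeff_Suc_explicit x_def s_def F_def Q_def ..
    show ?thesis
      unfolding p1 p2 of_nat_fact f1 c F_def[symmetric] s_def[symmetric]
      using nonzero by (simp add: field_simps power2_eq_square)
  qed
  have "(\<lambda>k. fps_nth (fps_theta fps_J0) (Suc k) * (z^2)^(Suc k)) sums eval_exp2 (fps_theta fps_J0) (Ln z)"
    using eval_exp2_Ln_sums[OF entire_fps_theta[OF entire_fps_J0] z] by (subst sums_Suc_iff) simp
  hence "(\<lambda>k. z * ((-1)^k * (z/2)^(2*k+1) / (of_nat (fact k) * of_nat (fact (1+k)))))
      sums (- dJ0_log (Ln z))"
    unfolding term_eq dJ0_log_def using sums_mult[of _ _ "-2"] by simp
  hence "(\<lambda>k. (1/z) * (z * ((-1)^k * (z/2)^(2*k+1) / (of_nat (fact k) * of_nat (fact (1+k))))))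
      sums ((1/z) * (- dJ0_log (Ln z)))"
    by (rule sums_mult)
  hence "(\<lambda>k. (-1)^k * (z/2)^(2*k+1) / (of_nat (fact k) * of_nat (fact (1+k))))
      sums ((1/z) * (- dJ0_log (Ln z)))"
    using z by simp
  thus ?thesis unfolding BesselJ_def using z by (simp add: sums_iff)
qed

definition fps_Y1 :: "complex fps" where "fps_Y1 = fps_J0 - fps_const 2 * fps_theta fps_J0_psi"

lemma entire_fps_Y1: "entire_fps fps_Y1"
  unfolding fps_Y1_def
  by (intro entire_fps_diff entire_fps_mult entire_fps_const entire_fps_theta entire_fps_J0 entire_fps_J0_psi)

lemma eval_exp2_Y1: "eval_exp2 fps_Y1 w = J0_log w - 2 * eval_exp2 (fps_theta fps_J0_psi) w"
  unfolding fps_Y1_def J0_log_def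
  by (simp add: eval_exp2_diff eval_exp2_const_mult entire_fps_J0 entire_fps_mult entire_fps_const
      entire_fps_theta entire_fps_J0_psi)

lemma BesselY1_eq: "z \<noteq> 0 \<Longrightarrow> z * BesselY 1 z = - (2 / of_real pi) * dY0_log (Ln z)"
proof -
  assume z: "z \<noteq> 0"
  have term_eq: "(Digamma (of_nat (k+1)) + Digamma (of_nat (1+k+1))) * (-(z^2)/4)^k
      / (of_nat (fact k) * of_nat (fact (1+k))) = (4 / z^2) * (fps_nth fps_Y1 (Suc k) * (z^2)^(Suc k))"
    for k
  proof -
    define x where "x = (of_nat (Suc k) :: complex)"
    define s where "s = ((-1)^k :: complex)"
    define F where "F = (fact k :: complex)"
    define Q where "Q = (4^k :: complex)"
    define Z where "Z = z^2"
    define p where "p = psi_succ k"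
    have nonzero: "x \<noteq> 0" "F \<noteq> 0" "Q \<noteq> 0" "Z \<noteq> 0"
      unfolding x_def F_def Q_def Z_def using z by (simp_all del: of_nat_Suc)
    have "-(z^2)/4 = (-1) * (z^2/4)" by simp
    hence a: "(-(z^2)/4)^k = s * (z^2)^k / Q"
      unfolding s_def Q_def by (simp only: power_mult_distrib power_divide) simp
    have b: "Digamma (of_nat (k+1)) = p" "Digamma (of_nat (1+k+1)) = p + 1/x"
      using psi_succ_Suc[of k] by (simp_all add: psi_succ_def p_def x_def add_ac)
    have f1: "(fact (1+k) :: complex) = x * F" unfolding x_def F_def by (simp add: algebra_simps)
    have c: "fps_nth fps_Y1 (Suc k)
        = (- (s / (4 * Q * (x * F)^2))) - 2 * (x * ((- (s / (4 * Q * (x * F)^2))) * (p + 1/x)))"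
      unfolding fps_Y1_def fps_sub_nth fps_mult_left_const_nth fps_theta_nth fps_J0_def fps_J0_psi_def
        fps_nth_Abs_fps J0_coeff_Suc_explicit
      using psi_succ_Suc[of k] by (simp add: x_def s_def F_def Q_def p_def)
    show ?thesis unfolding a b of_nat_fact f1 c F_def[symmetric] unfolding Z_def[symmetric]
      using nonzero by (simp add: field_simps power2_eq_square)
  qed
  have "(\<lambda>k. fps_nth fps_Y1 (Suc k) * (z^2)^(Suc k)) sums (eval_exp2 fps_Y1 (Ln z) - 1)"
    using eval_exp2_Ln_sums[OF entire_fps_Y1 z]
    by (subst sums_Suc_iff) (simp add: fps_Y1_def fps_J0_def J0_coeff_def)
  hence "(\<lambda>k. (4 / z^2) * (fps_nth fps_Y1 (Suc k) * (z^2)^(Suc k)))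
      sums ((4 / z^2) * (eval_exp2 fps_Y1 (Ln z) - 1))"
    by (rule sums_mult)
  hence series: "(\<Sum>k. (Digamma (of_nat (k+1)) + Digamma (of_nat (1+k+1))) * (-(z^2)/4)^k
      / (of_nat (fact k) * of_nat (fact (1+k)))) = (4 / z^2) * (eval_exp2 fps_Y1 (Ln z) - 1)"
    unfolding term_eq by (simp add: sums_iff)
  have "(z/2) powi (- int 1) = 2 / z" by (simp add: power_int_minus)
  hence "z * BesselY 1 z = - (z * (2 / z) / of_real pi)
      + (2 / of_real pi) * log_half (Ln z) * (z * BesselJ 1 z)
      - (z * (z / 2) / of_real pi) * ((4 / z^2) * (eval_exp2 fps_Y1 (Ln z) - 1))"
    unfolding BesselY_def Ln_half[OF z] series by (simp add: algebra_simps)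
  also have "\<dots> = - (2 / of_real pi) * dY0_log (Ln z)"
    unfolding BesselJ1_eq[OF z] eval_exp2_Y1 using z
    by (simp add: dY0_log_def field_simps power2_eq_square)
  finally show ?thesis .
qed

lemma Hankel0_combination:
  assumes "z \<noteq> 0"
  shows "(- of_int m * of_real (pi^2) * (of_int m + 1) / 4) * Hankel1 0 z
       + (- of_int m * of_real (pi^2) * (of_int m - 1) / 4) * Hankel2 0 z
       = ((of_int m * of_real pi * \<i>)^2 / 2) * J0_log (Ln z) - of_int m * of_real pi * \<i> * Y0_log (Ln z)"
  unfolding Hankel1_def Hankel2_def BesselJ0_eq[OF assms] BesselY0_eq[OF assms]
  by (simp add: field_simps power2_eq_square)

lemma Hankel1_combination:
  assumes "z \<noteq> 0"
  shows "z * ((- of_int m * of_real (pi^2) * (of_int m + 1) / 4) * Hankel1 1 z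
       + (- of_int m * of_real (pi^2) * (of_int m - 1) / 4) * Hankel2 1 z)
       = - (((of_int m * of_real pi * \<i>)^2 / 2) * dJ0_log (Ln z) - of_int m * of_real pi * \<i> * dY0_log (Ln z))"
proof -
  have "z * ((- of_int m * of_real (pi^2) * (of_int m + 1) / 4) * Hankel1 1 z
       + (- of_int m * of_real (pi^2) * (of_int m - 1) / 4) * Hankel2 1 z)
      = - ((of_int m)^2) * of_real (pi^2) / 2 * (z * BesselJ 1 z)
        - \<i> * of_int m * of_real (pi^2) / 2 * (z * BesselY 1 z)"
    unfolding Hankel1_def Hankel2_def by (simp add: field_simps power2_eq_square)
  thus ?thesis
    unfolding BesselJ1_eq[OF assms] BesselY1_eq[OF assms]
    by (simp add: field_simps power2_eq_square)
qed

lemma exp_int_pi_i: "exp (of_int j * (of_real pi * \<i>)) = (-1::complex) powi j"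
  using exp_power_int[of "of_real pi * \<i>" j] by simp

theorem lemma3p9:
  fixes n :: nat and m :: int and \<zeta> :: complex
  assumes "n \<ge> 1" and "\<zeta> \<noteq> 0" and "- pi < Arg \<zeta>" and "Arg \<zeta> < pi"
  shows "Scov_n n (Ln \<zeta> - of_int m * of_real pi * \<i>) =
      (-1) powi (m * int n) * Sn n \<zeta>
    + (-1) powi ((m + 1) * int n) / (2^n * of_nat (fact n)) * \<zeta> powi (- int n) *
      ( - delta m * (poly (odd_part (polyA n)) \<zeta> + poly (odd_part (polyB n)) \<zeta> * S10 \<zeta>
                     + \<zeta> * poly (odd_part (polyC n)) \<zeta> * deriv S10 \<zeta>)
        + poly (bar_part m (polyB n)) \<zeta> *
            ((- of_int m * of_real (pi^2) * (of_int m + 1) / 4) * Hankel1 0 \<zeta>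
             + (- of_int m * of_real (pi^2) * (of_int m - 1) / 4) * Hankel2 0 \<zeta>)
        - \<zeta> * poly (bar_part m (polyC n)) \<zeta> *
            ((- of_int m * of_real (pi^2) * (of_int m + 1) / 4) * Hankel1 1 \<zeta>
             + (- of_int m * of_real (pi^2) * (of_int m - 1) / 4) * Hankel2 1 \<zeta>))"
proof -
  obtain k where n: "n = Suc k" using assms(1) by (cases n) auto
  define c where "c = of_int m * of_real pi * \<i>"
  have "exp (2*c) = 1"
    using exp_int_pi_i[of "2*m"] by (simp add: c_def power_int_mult mult_ac)
  note shift = Scov_n_period_shift[OF this, of k "Ln \<zeta>", folded n]
  have sign_c: "exp (- (of_nat n * c)) = (-1) powi (m * int n)"
    using exp_int_pi_i[of "- (m * int n)"] by (simp add: c_def power_int_minus_one_minus mult_ac)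
  have power_\<zeta>: "exp (- (of_nat n * Ln \<zeta>)) = \<zeta> powi (- int n)"
    using assms(2) by (simp add: exp_minus exp_of_nat_mult power_int_minus)
  have sign: "(-1::complex) powi ((m + 1) * int n) = (-1) powi (m * int n) * (-1)^n"
    by (simp add: distrib_right power_int_add)
  have even: "even_poly (polyA n)" "even_poly (polyB n)" "even_poly (polyC n)"
    using even_poly_polyABC[of k] n by auto
  have K1: "\<zeta> * poly (polyC n) \<zeta> * ((- of_int m * of_real (pi^2) * (of_int m + 1) / 4) * Hankel1 1 \<zeta>
             + (- of_int m * of_real (pi^2) * (of_int m - 1) / 4) * Hankel2 1 \<zeta>)
      = - poly (polyC n) \<zeta> * ((c^2/2) * dJ0_log (Ln \<zeta>) - c * dY0_log (Ln \<zeta>))"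
    unfolding mult.assoc[of \<zeta>] mult.left_commute[of \<zeta>] Hankel1_combination[OF assms(2)]
    by (simp add: c_def algebra_simps)
  have "Scov_n n (Ln \<zeta> - c) = (-1) powi (m * int n) * Sn n \<zeta>
    + (-1) powi ((m + 1) * int n) / (2^n * of_nat (fact n)) * \<zeta> powi (- int n) *
      (poly (polyB n) \<zeta> * ((c^2/2) * J0_log (Ln \<zeta>) - c * Y0_log (Ln \<zeta>))
       + poly (polyC n) \<zeta> * ((c^2/2) * dJ0_log (Ln \<zeta>) - c * dY0_log (Ln \<zeta>)))"
    unfolding shift sign_c power_\<zeta> sign Sn_def exp_Ln[OF assms(2)] by (simp add: field_simps)
  then show ?thesis
    unfolding odd_part_even_poly[OF even(1)] odd_part_even_poly[OF even(2)] odd_part_even_poly[OF even(3)]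
      bar_part_even_poly[OF even(2)] bar_part_even_poly[OF even(3)] K1
      Hankel0_combination[OF assms(2), folded c_def] c_def[symmetric]
    by simp
qed

end
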